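(* Let $\psi$ satisfy Assumption $(\mathrm{A}_\ell)$ for some $\ell\ge 0$, and let $(\eta,v)$ with $\eta\in\mathcal C^1([0,\infty);\mathcal C(\overline\Omega_0))$, $v$ continuous, be a solution of the Lagrangian system (L) with initial history $v_s\in\mathcal C([-\tau,0]\times\overline\Omega_0)$ (compatible with $\eta$ as described in the context). Assume $R_V<+\infty$ and the flocking condition \[ d_V(0)+\int_{-\tau}^0 d_V(s)\,ds<\int_{d_X(-\tau)+R_V\tau}^\infty\widetilde\psi(s)\,ds . \] Then $\sup_{t\ge0}d_X(t)<+\infty$, and there is a constant $C>0$ independent of time such that \[ d_V(t)\le\Big(\max_{s\in[-\tau,0]}d_V(s)\Big)e^{-Ct}\qquad\text{for all }t\ge0. \]
   Context: Let $d\in\mathbb N$, $\tau\ge0$, $\Omega_0\subset\mathbb R^d$ a bounded open set, $\rho_0:\Omega_0\to[0,\infty)$ integrable with $\int_{\Omega_0}\rho_0=1$. Assumption $(\mathrm{A}_\ell)$: $\psi:\mathbb R^d\to(0,\infty)$ is continuous, $\psi(x)=\widetilde\psi(|x|)$ with $\widetilde\psi:[0,\infty)\to(0,\infty)$ nonincreasing, positive, bounded, $\widetilde\psi(0)=1$; if $\ell\ge1$, $\psi$ is $\mathcal C^\ell$ with uniformly bounded derivatives up to order $\ell$. Lagrangian system (L): for $x\in\Omega_0$, $t>0$: $\frac{d\eta_t(x)}{dt}=v_t(x)$, $\frac{dv_t(x)}{dt}=\frac{\int_{\Omega_0}\psi(\eta_t(x)-\eta_{t-\tau}(y))\rho_0(y)v_{t-\tau}(y)dy}{\int_{\Omega_0}\psi(\eta_t(x)-\eta_{t-\tau}(y))\rho_0(y)dy}-v_t(x)$,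 with prescribed initial history $(\eta_s,v_s)$, $s\in[-\tau,0]$, where $\eta_0(x)=x$ and $\frac{d\eta_s(x)}{ds}=v_s(x)$ for $s\in[-\tau,0]$ (the history is a piece of the characteristic flow). Notation: $d_X(t):=\max_{x,y\in\overline\Omega_0}|\eta_t(x)-\eta_t(y)|$, $d_V(t):=\max_{x,y\in\overline\Omega_0}|v_t(x)-v_t(y)|$ for $t\ge-\tau$, and $R_V:=\max_{s\in[-\tau,0]}\max_{x\in\overline\Omega_0}|v_s(x)|$. *)

theory Defs
  imports "HOL-Analysis.Analysis"
begin

text \<open>Assumption (A_0): psi radial, psi(x) = psit(|x|), psit positive, bounded,
  nonincreasing on [0,oo), psit 0 = 1, psi continuous.  (A_l) for l >= 1 only adds
  smoothness, so the theorem for "some l >= 0" is exactly the theorem under (A_0).\<close>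
definition psi_assm :: "('a::euclidean_space \<Rightarrow> real) \<Rightarrow> (real \<Rightarrow> real) \<Rightarrow> bool" where
  "psi_assm psi psit \<longleftrightarrow>
     continuous_on UNIV psi \<and>
     (\<forall>x. psi x = psit (norm x)) \<and>
     (\<forall>r\<ge>0. psit r > 0) \<and>
     (\<forall>r s. 0 \<le> r \<longrightarrow> r \<le> s \<longrightarrow> psit s \<le> psit r) \<and>
     bdd_above (psit ` {0..}) \<and>
     psit 0 = 1"

definition dX :: "(real \<Rightarrow> 'a::euclidean_space \<Rightarrow> 'a) \<Rightarrow> 'a set \<Rightarrow> real \<Rightarrow> real" where
  "dX eta \<Omega> t = (SUP xy \<in> closure \<Omega> \<times> closure \<Omega>. norm (eta t (fst xy) - eta t (snd xy)))"

definition dV :: "(real \<Rightarrow> 'a::euclidean_space \<Rightarrow> 'a) \<Rightarrow> 'a set \<Rightarrow> real \<Rightarrow> real" where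
  "dV v \<Omega> t = (SUP xy \<in> closure \<Omega> \<times> closure \<Omega>. norm (v t (fst xy) - v t (snd xy)))"

definition RV :: "(real \<Rightarrow> 'a::euclidean_space \<Rightarrow> 'a) \<Rightarrow> 'a set \<Rightarrow> real \<Rightarrow> real" where
  "RV v \<Omega> \<tau> = (SUP sx \<in> {-\<tau>..0} \<times> closure \<Omega>. norm (v (fst sx) (snd sx)))"

definition align :: "('a::euclidean_space \<Rightarrow> real) \<Rightarrow> ('a \<Rightarrow> real) \<Rightarrow> 'a set \<Rightarrow>
    (real \<Rightarrow> 'a \<Rightarrow> 'a) \<Rightarrow> (real \<Rightarrow> 'a \<Rightarrow> 'a) \<Rightarrow> real \<Rightarrow> real \<Rightarrow> 'a \<Rightarrow> 'a" where
  "align psi rho0 \<Omega> eta v \<tau> t x =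
     integral \<Omega> (\<lambda>y. (psi (eta t x - eta (t - \<tau>) y) * rho0 y) *\<^sub>R v (t - \<tau>) y) /\<^sub>R
     integral \<Omega> (\<lambda>y. psi (eta t x - eta (t - \<tau>) y) * rho0 y)"

end

theory Submission
  imports Defs
begin

text \<open>
  The velocities obey a maximum principle, so they stay bounded by R_V. Hence the delayed
  distance between two particles at time t is at most X(t) = d_X(-\<tau>) + R_V \<tau> + (integral of d_V
  over [-\<tau>, t - \<tau>]) (\<open>spread\<close> below), every interaction weight is at least \<psi>(X(t)), and weighted
  averaging contracts velocity oscillations by the factor 1 - \<psi>(X(t)). Duhamel's formula gives
  d_V(t) \<le> Z(t) (\<open>majorant\<close> below), where Z solves Z' = -Z + (1 - \<psi>(X(t))) d_V(t - \<tau>) with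
  Z(0) = d_V(0). The functional Z(t) + (integral of d_V over [t - \<tau>, t]) + \<Psi>(X(t)), with
  \<Psi>' = \<psi>, has derivative d_V(t) - Z(t) \<le> 0. So the integral of \<psi> over [X(0), X(t)] never
  exceeds d_V(0) + (integral of d_V over [-\<tau>, 0]), and the flocking condition keeps X bounded.
  This bounds d_X, makes the contraction factor uniformly smaller than 1, and a Halanay-type
  argument for the resulting delayed integral inequality yields exponential decay of d_V.
\<close>

section \<open>Comparison arguments on the real line\<close>

lemma less_on_atLeast_by_first_crossing:
  fixes f g :: "real \<Rightarrow> real"
  assumes "continuous_on {0..} f" "continuous_on {0..} g" "f 0 < g 0"
    and step: "\<And>t. t > 0 \<Longrightarrow> (\<forall>s\<in>{0..t}. f s \<le> g s) \<Longrightarrow> f t < g t"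
  shows "\<forall>t\<ge>0. f t < g t"
proof (rule ccontr)
  assume "\<not> (\<forall>t\<ge>0. f t < g t)"
  then obtain T where T: "T \<ge> 0" "g T \<le> f T" by force
  define S where "S = {s\<in>{0..T}. g s - f s \<le> 0}"
  have cont: "continuous_on {0..T} (\<lambda>s. g s - f s)"
    using continuous_on_subset[OF assms(1)] continuous_on_subset[OF assms(2)]
    by (intro continuous_intros) auto
  have "closed S" unfolding S_def
    using continuous_closed_preimage[OF cont closed_atLeastAtMost, of "{..0}"]
    by (simp add: vimage_def Int_def)
  moreover have "S \<noteq> {}" using T unfolding S_def by auto
  moreover have bdd: "bdd_below S" unfolding S_def by (rule bdd_belowI[of _ 0]) auto
  ultimately have "Inf S \<in> S" by (intro closed_contains_Inf)
  define t1 where "t1 = Inf S"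
  have t1: "0 \<le> t1" "t1 \<le> T" "g t1 \<le> f t1"
    using \<open>Inf S \<in> S\<close> unfolding S_def t1_def by auto
  have before: "f s < g s" if "0 \<le> s" "s < t1" for s
  proof (rule ccontr)
    assume "\<not> f s < g s"
    hence "s \<in> S" using that t1 unfolding S_def by auto
    hence "t1 \<le> s" unfolding t1_def using bdd by (rule cInf_lower)
    thus False using that by simp
  qed
  have "t1 \<noteq> 0" using t1 assms(3) by auto
  hence "t1 > 0" using t1 by simp
  have "0 \<le> g t1 - f t1"
  proof (rule continuous_ge_on_closure[of "{0..<t1}" "\<lambda>s. g s - f s"])
    show "continuous_on (closure {0..<t1}) (\<lambda>s. g s - f s)"
      using continuous_on_subset[OF cont, of "closure {0..<t1}"] \<open>t1 > 0\<close> t1(2)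
      by (simp add: closure_atLeastLessThan)
    show "t1 \<in> closure {0..<t1}" using \<open>t1 > 0\<close> by (simp add: closure_atLeastLessThan)
    show "\<And>s. s \<in> {0..<t1} \<Longrightarrow> 0 \<le> g s - f s" using before by (auto intro: less_imp_le)
  qed
  hence "\<forall>s\<in>{0..t1}. f s \<le> g s" using before
    by (metis atLeastAtMost_iff diff_ge_0_iff_ge less_eq_real_def)
  hence "f t1 < g t1" using step \<open>t1 > 0\<close> by blast
  thus False using t1 by simp
qed

lemma integral_has_real_derivative_at:
  assumes "continuous_on {a..b} h" "a < t" "t < b"
  shows "((\<lambda>u. integral {a..u} h) has_real_derivative h t) (at t)"
proof -
  have "((\<lambda>u. integral {a..u} h) has_real_derivative h t) (at t within {a..b})"
    using assms by (intro integral_has_real_derivative) auto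
  moreover have "t \<in> interior {a..b}" using assms(2,3) by (simp add: interior_atLeastAtMost_real)
  ultimately show ?thesis using at_within_interior by metis
qed

lemma exp_scaled_has_integral:
  fixes k t :: real
  assumes "k \<noteq> 0" "t \<ge> 0"
  shows "((\<lambda>s. exp (k * s)) has_integral (exp (k * t) - 1) / k) {0..t}"
proof -
  have "((\<lambda>s. exp (k * s)) has_integral exp (k * t) / k - exp (k * 0) / k) {0..t}"
  proof (rule fundamental_theorem_of_calculus[OF assms(2)])
    fix s :: real
    have "((\<lambda>s. exp (k * s) / k) has_real_derivative exp (k * s) * k / k) (at s within {0..t})"
      by (intro derivative_eq_intros) (use assms(1) in auto)
    thus "((\<lambda>s. exp (k * s) / k) has_vector_derivative exp (k * s)) (at s within {0..t})"
      using assms(1) by (simp add: has_real_derivative_iff_has_vector_derivative)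
  qed
  thus ?thesis by (simp add: diff_divide_distrib)
qed

lemma norm_le_variation_of_constants:
  fixes u f :: "real \<Rightarrow> 'b::euclidean_space"
  assumes t: "t \<ge> 0" and "continuous_on {0..t} u"
    and du: "\<And>s. s \<in> {0<..<t} \<Longrightarrow> (u has_vector_derivative (f s - u s)) (at s)"
    and fG: "\<And>s. s \<in> {0..t} \<Longrightarrow> norm (f s) \<le> G s" and "continuous_on {0..t} G"
  shows "norm (u t) \<le> exp (-t) * norm (u 0) + exp (-t) * integral {0..t} (\<lambda>s. exp s * G s)"
proof -
  define w where "w = (\<lambda>s. exp s *\<^sub>R u s)"
  have "((\<lambda>s. exp s *\<^sub>R f s) has_integral w t - w 0) {0..t}"
  proof (rule fundamental_theorem_of_calculus_interior[OF t])
    show "continuous_on {0..t} w" unfolding w_def using assms(2) by (intro continuous_intros)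
    fix s assume "s \<in> {0<..<t}"
    from has_vector_derivative_scaleR[OF DERIV_exp du[OF this]]
    show "(w has_vector_derivative exp s *\<^sub>R f s) (at s)"
      unfolding w_def by (simp add: algebra_simps)
  qed
  hence eq: "integral {0..t} (\<lambda>s. exp s *\<^sub>R f s) = w t - w 0"
    and int: "(\<lambda>s. exp s *\<^sub>R f s) integrable_on {0..t}"
    by (auto simp: integral_unique has_integral_integrable)
  have "norm (w t - w 0) \<le> integral {0..t} (\<lambda>s. exp s * G s)"
    unfolding eq[symmetric]
  proof (rule integral_norm_bound_integral[OF int])
    show "(\<lambda>s. exp s * G s) integrable_on {0..t}"
      using assms(5) by (intro integrable_continuous_interval continuous_intros)
  qed (use fG in \<open>simp add: mult_left_mono\<close>)
  hence "exp t * norm (u t) \<le> norm (u 0) + integral {0..t} (\<lambda>s. exp s * G s)"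
    unfolding w_def using norm_triangle_ineq2[of "exp t *\<^sub>R u t" "exp 0 *\<^sub>R u 0"] by simp
  hence "exp (-t) * (exp t * norm (u t)) \<le> exp (-t) * (norm (u 0) + integral {0..t} (\<lambda>s. exp s * G s))"
    by (simp add: mult_left_mono)
  thus ?thesis by (simp add: exp_minus field_simps)
qed

lemma delay_decay_rate:
  fixes m \<tau> :: real
  assumes m: "0 < m" "m \<le> 1" and \<tau>: "0 \<le> \<tau>"
  defines "C \<equiv> m / (2 * (1 + \<tau>))"
  shows "0 < C" "C < 1" "(1 - m) * exp (C * \<tau>) \<le> 1 - C"
proof -
  show "0 < C" unfolding C_def using m \<tau> by simp
  show "C < 1" unfolding C_def using m \<tau> by (simp add: field_simps)
  have C\<tau>: "C * \<tau> \<le> 1/2" unfolding C_def using m \<tau> mult_left_mono[OF m(2) \<tau>] by (simp add: field_simps)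
  \<comment> \<open>\<open>exp (C \<tau>) \<le> 1 / (1 - C \<tau>)\<close> and \<open>(1 - C)(1 - C \<tau>) \<ge> 1 - C (1 + \<tau>) = 1 - m/2\<close>\<close>
  have "exp (C * \<tau>) * (1 - C * \<tau>) \<le> 1"
    using exp_ge_add_one_self[of "- (C * \<tau>)"] by (simp add: exp_minus field_simps)
  hence e: "exp (C * \<tau>) \<le> 1 / (1 - C * \<tau>)" using C\<tau> by (simp add: field_simps)
  have "(1 - m) * exp (C * \<tau>) \<le> (1 - m) / (1 - C * \<tau>)"
    using mult_left_mono[OF e, of "1 - m"] m by simp
  also have "\<dots> \<le> 1 - C"
  proof -
    have "C * (1 + \<tau>) = m / 2" unfolding C_def using \<tau> by (simp add: field_simps)
    moreover have "(1 - C) * (1 - C * \<tau>) = 1 - C * (1 + \<tau>) + C * C * \<tau>" by (simp add: algebra_simps)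
    moreover have "C * C * \<tau> \<ge> 0" using \<tau> by simp
    ultimately have "1 - m \<le> (1 - C) * (1 - C * \<tau>)" using m by linarith
    thus ?thesis using C\<tau> by (simp add: field_simps)
  qed
  finally show "(1 - m) * exp (C * \<tau>) \<le> 1 - C" .
qed

lemma delayed_duhamel_decay_strict:
  fixes D :: "real \<Rightarrow> real"
  assumes \<tau>: "0 \<le> \<tau>" and q: "0 \<le> q" and C: "0 < C" "C < 1" "q * exp (C * \<tau>) \<le> 1 - C"
    and D_cont: "continuous_on {-\<tau>..} D"
    and history: "\<And>s. s \<in> {-\<tau>..0} \<Longrightarrow> D s \<le> M" and "0 \<le> M"
    and duhamel: "\<And>t. 0 \<le> t \<Longrightarrow>
      D t \<le> exp (-t) * D 0 + exp (-t) * integral {0..t} (\<lambda>s. exp s * (q * D (s - \<tau>)))"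
    and \<epsilon>: "0 < \<epsilon>"
  shows "\<forall>t\<ge>0. D t < (M + \<epsilon>) * exp (- C * t)"
proof (rule less_on_atLeast_by_first_crossing)
  show "continuous_on {0..} D" using D_cont by (rule continuous_on_subset) (use \<tau> in auto)
  show "continuous_on {0..} (\<lambda>t. (M + \<epsilon>) * exp (- C * t))" by (intro continuous_intros)
  show "D 0 < (M + \<epsilon>) * exp (- C * 0)" using history[of 0] \<tau> \<epsilon> by simp
  fix t :: real assume t: "t > 0" and hyp: "\<forall>s\<in>{0..t}. D s \<le> (M + \<epsilon>) * exp (- C * s)"
  define K where "K = q * (M + \<epsilon>) * exp (C * \<tau>)"
  have delayed: "D (s - \<tau>) \<le> (M + \<epsilon>) * exp (- C * (s - \<tau>))" if s: "s \<in> {0..t}" for s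
  proof (cases "s - \<tau> \<le> 0")
    case True
    have "1 \<le> exp (- C * (s - \<tau>))" using True C by (simp add: mult_nonneg_nonpos)
    hence "M + \<epsilon> \<le> (M + \<epsilon>) * exp (- C * (s - \<tau>))" using \<open>0 \<le> M\<close> \<epsilon> by simp
    thus ?thesis using history[of "s - \<tau>"] True s \<epsilon> by simp
  qed (use hyp s \<tau> in auto)
  have integrand_le: "exp s * (q * D (s - \<tau>)) \<le> K * exp ((1 - C) * s)" if s: "s \<in> {0..t}" for s
  proof -
    have "exp s * (q * D (s - \<tau>)) \<le> exp s * (q * ((M + \<epsilon>) * exp (- C * (s - \<tau>))))"
      using delayed[OF s] q by (simp add: mult_left_mono)
    also have "\<dots> = K * exp ((1 - C) * s)" unfolding K_def by (simp add: algebra_simps flip: exp_add)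
    finally show ?thesis .
  qed
  have "continuous_on {0..t} (\<lambda>s. exp s * (q * D (s - \<tau>)))"
    by (intro continuous_intros continuous_on_compose2[OF D_cont]) (use \<tau> in auto)
  hence "integral {0..t} (\<lambda>s. exp s * (q * D (s - \<tau>))) \<le> K * ((exp ((1 - C) * t) - 1) / (1 - C))"
    using exp_scaled_has_integral[of "1 - C" t] C(2) t integrand_le
    by (intro has_integral_le[OF integrable_integral[OF integrable_continuous_interval]
          has_integral_mult_right]) auto
  also have "\<dots> \<le> (M + \<epsilon>) * (exp ((1 - C) * t) - 1)"
  proof -
    have "K \<le> (1 - C) * (M + \<epsilon>)"
      unfolding K_def using mult_right_mono[OF C(3), of "M + \<epsilon>"] \<open>0 \<le> M\<close> \<epsilon> by (simp add: algebra_simps)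
    hence "K / (1 - C) \<le> M + \<epsilon>" using C(2) by (simp add: pos_divide_le_eq mult.commute)
    moreover have "exp ((1 - C) * t) - 1 \<ge> 0" using C(2) t by simp
    ultimately have "K / (1 - C) * (exp ((1 - C) * t) - 1) \<le> (M + \<epsilon>) * (exp ((1 - C) * t) - 1)"
      by (rule mult_right_mono)
    thus ?thesis by simp
  qed
  finally have "exp (-t) * integral {0..t} (\<lambda>s. exp s * (q * D (s - \<tau>)))
      \<le> exp (-t) * ((M + \<epsilon>) * (exp ((1 - C) * t) - 1))" by simp
  hence "D t \<le> exp (-t) * D 0 + exp (-t) * ((M + \<epsilon>) * (exp ((1 - C) * t) - 1))"
    using duhamel[of t] t by linarith
  also have "\<dots> < exp (-t) * (M + \<epsilon>) + exp (-t) * ((M + \<epsilon>) * (exp ((1 - C) * t) - 1))"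
    using history[of 0] \<tau> \<epsilon> by simp
  also have "\<dots> = (M + \<epsilon>) * exp (- C * t)" by (simp add: algebra_simps flip: exp_add)
  finally show "D t < (M + \<epsilon>) * exp (- C * t)" .
qed

lemma delayed_duhamel_decay:
  fixes D :: "real \<Rightarrow> real"
  assumes \<tau>: "0 \<le> \<tau>" and q: "0 \<le> q" and C: "0 < C" "C < 1" "q * exp (C * \<tau>) \<le> 1 - C"
    and D_cont: "continuous_on {-\<tau>..} D" and D_nonneg: "\<And>s. s \<in> {-\<tau>..0} \<Longrightarrow> 0 \<le> D s"
    and duhamel: "\<And>t. 0 \<le> t \<Longrightarrow>
      D t \<le> exp (-t) * D 0 + exp (-t) * integral {0..t} (\<lambda>s. exp s * (q * D (s - \<tau>)))"
    and t: "0 \<le> t"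
  shows "D t \<le> (SUP s\<in>{-\<tau>..0}. D s) * exp (- C * t)"
proof (rule field_le_epsilon)
  define M where "M = (SUP s\<in>{-\<tau>..0}. D s)"
  have "compact (D ` {-\<tau>..0})"
    using D_cont by (intro compact_continuous_image) (auto elim: continuous_on_subset)
  hence history: "D s \<le> M" if "s \<in> {-\<tau>..0}" for s
    unfolding M_def using that by (intro cSUP_upper bounded_imp_bdd_above compact_imp_bounded)
  have "0 \<le> M" using D_nonneg[of 0] history[of 0] \<tau> by simp
  fix e :: real assume e: "0 < e"
  have "exp (- C * t) \<le> 1" using C t by simp
  hence "e * exp (- C * t) \<le> e" using e by (simp add: mult_left_le_one_le)
  moreover have "D t < (M + e) * exp (- C * t)"
    using delayed_duhamel_decay_strict[OF \<tau> q C D_cont history \<open>0 \<le> M\<close> duhamel e] t by blast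
  ultimately show "D t \<le> M * exp (- C * t) + e" by (simp add: distrib_right)
qed

lemma integral_gt_of_nn_integral_tail_gt:
  fixes f :: "real \<Rightarrow> real"
  assumes f_cont: "continuous_on UNIV f" and f_nonneg: "\<And>s. 0 \<le> f s"
    and tail: "ennreal L < (\<integral>\<^sup>+ s. ennreal (f s) * indicator {a..} s \<partial>lborel)"
  shows "\<exists>b\<ge>a. L < integral {a..b} f"
proof (rule ccontr)
  assume "\<not> ?thesis"
  hence le: "integral {a..a + real n} f \<le> L" for n :: nat by (meson le_add_same_cancel1 not_le of_nat_0_le_iff)
  have [measurable]: "f \<in> borel_measurable borel" using f_cont by (rule borel_measurable_continuous_onI)
  define F where "F = (\<lambda>(n::nat) s. ennreal (f s) * indicator {a..a + real n} s)"
  have "ennreal (f s) * indicator {a..} s = (SUP n. F n s)" for s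
  proof (cases "a \<le> s")
    case True
    obtain n :: nat where "s - a \<le> real n" using real_arch_simple by blast
    hence "F n s = ennreal (f s)" unfolding F_def using True by (simp add: indicator_def)
    moreover have "F k s \<le> ennreal (f s)" for k unfolding F_def by (simp add: indicator_def)
    ultimately have "(SUP n. F n s) = ennreal (f s)" by (metis UNIV_I SUP_upper antisym SUP_least)
    thus ?thesis using True by simp
  qed (simp add: F_def)
  hence "(\<integral>\<^sup>+ s. ennreal (f s) * indicator {a..} s \<partial>lborel) = (\<integral>\<^sup>+ s. (SUP n. F n s) \<partial>lborel)"
    by simp
  also have "\<dots> = (SUP n. integral\<^sup>N lborel (F n))"
    by (rule nn_integral_monotone_convergence_SUP)
      (auto simp: F_def incseq_def le_fun_def indicator_def intro!: mult_left_mono)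
  also have "\<dots> \<le> ennreal L"
  proof (rule SUP_least)
    fix n
    have "integral\<^sup>N lborel (F n) = (\<integral>\<^sup>+ s. ennreal (indicator {a..a + real n} s * f s) \<partial>lborel)"
      unfolding F_def by (intro nn_integral_cong) (simp add: indicator_def)
    also have "\<dots> = ennreal (integral {a..a + real n} f)"
      using f_cont f_nonneg
      by (intro nn_integral_has_integral_lebesgue integrable_integral integrable_continuous_interval)
        (auto elim: continuous_on_subset)
    also have "\<dots> \<le> ennreal L" using le[of n] by (rule ennreal_leI)
    finally show "integral\<^sup>N lborel (F n) \<le> ennreal L" .
  qed
  finally show False using tail by simp
qed

section \<open>Suprema of continuous families over compact sets\<close>

lemma continuous_on_Times_slice_fst:
  assumes "continuous_on (A \<times> B) (\<lambda>(t, x). F t x)" "t \<in> A"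
  shows "continuous_on B (F t)"
proof -
  have "continuous_on B (\<lambda>x. (\<lambda>(t, x). F t x) (t, x))"
    by (rule continuous_on_compose2[OF assms(1)]) (use assms(2) in \<open>auto intro!: continuous_intros\<close>)
  thus ?thesis by simp
qed

lemma continuous_on_Times_slice_snd:
  assumes "continuous_on (A \<times> B) (\<lambda>(t, x). F t x)" "x \<in> B"
  shows "continuous_on A (\<lambda>t. F t x)"
proof -
  have "continuous_on A (\<lambda>t. (\<lambda>(t, x). F t x) (t, x))"
    by (rule continuous_on_compose2[OF assms(1)]) (use assms(2) in \<open>auto intro!: continuous_intros\<close>)
  thus ?thesis by simp
qed

lemma norm_le_SUP_norm:
  fixes f :: "'a::metric_space \<Rightarrow> 'b::real_normed_vector"
  assumes "compact K" "continuous_on K f" "x \<in> K"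
  shows "norm (f x) \<le> (SUP x\<in>K. norm (f x))"
proof -
  have "compact ((\<lambda>x. norm (f x)) ` K)"
    using assms by (intro compact_continuous_image continuous_intros)
  thus ?thesis using assms(3) by (intro cSUP_upper bounded_imp_bdd_above compact_imp_bounded)
qed

lemma SUP_norm_closure_le:
  fixes f :: "'a::metric_space \<Rightarrow> 'b::real_normed_vector"
  assumes "S \<noteq> {}" "continuous_on (closure S) f" "\<forall>x\<in>S. norm (f x) \<le> c"
  shows "(SUP x\<in>closure S. norm (f x)) \<le> c"
proof (rule cSUP_least)
  show "closure S \<noteq> {}" using assms(1) by auto
  fix x assume "x \<in> closure S"
  with assms show "norm (f x) \<le> c" by (intro continuous_on_closure_norm_le) auto
qed

lemma norm_diff_le_SUP_norm_diff:
  fixes f :: "'a::metric_space \<Rightarrow> 'b::real_normed_vector"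
  assumes "compact K" "continuous_on K f" "x \<in> K" "y \<in> K"
  shows "norm (f x - f y) \<le> (SUP xy\<in>K \<times> K. norm (f (fst xy) - f (snd xy)))"
proof -
  have "continuous_on (K \<times> K) (\<lambda>xy. f (fst xy) - f (snd xy))"
    by (intro continuous_intros continuous_on_compose2[OF assms(2)]) auto
  from norm_le_SUP_norm[OF compact_Times[OF assms(1,1)] this, of "(x, y)"] assms(3,4)
  show ?thesis by simp
qed

lemma SUP_norm_diff_closure_le:
  fixes f :: "'a::metric_space \<Rightarrow> 'b::real_normed_vector"
  assumes "S \<noteq> {}" "continuous_on (closure S) f" "\<forall>x\<in>S. \<forall>y\<in>S. norm (f x - f y) \<le> c"
  shows "(SUP xy\<in>closure S \<times> closure S. norm (f (fst xy) - f (snd xy))) \<le> c"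
proof -
  have "continuous_on (closure (S \<times> S)) (\<lambda>xy. f (fst xy) - f (snd xy))"
    unfolding closure_Times by (intro continuous_intros continuous_on_compose2[OF assms(2)]) auto
  from SUP_norm_closure_le[OF _ this] assms(1,3) show ?thesis by (simp add: closure_Times)
qed

lemma SUP_norm_le_SUP_norm_add:
  fixes F G :: "'k \<Rightarrow> 'b::real_normed_vector"
  assumes "K \<noteq> {}" "bdd_above ((\<lambda>k. norm (G k)) ` K)"
    and "\<And>k. k \<in> K \<Longrightarrow> norm (F k) \<le> norm (G k) + e"
  shows "(SUP k\<in>K. norm (F k)) \<le> (SUP k\<in>K. norm (G k)) + e"
proof -
  have "norm (F k) \<le> (SUP k\<in>K. norm (G k)) + e" if "k \<in> K" for k
    using assms(3)[OF that] cSUP_upper[OF that assms(2)] by linarith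
  thus ?thesis using assms(1) by (intro cSUP_least) auto
qed

lemma continuous_on_SUP_norm:
  fixes F :: "real \<Rightarrow> 'k::metric_space \<Rightarrow> 'b::real_normed_vector"
  assumes K: "compact K" and cF: "continuous_on ({a..} \<times> K) (\<lambda>(t, k). F t k)"
  shows "continuous_on {a..} (\<lambda>t. SUP k\<in>K. norm (F t k))"
proof (cases "K = {}")
  case False
  have bdd: "bdd_above ((\<lambda>k. norm (F t k)) ` K)" if "t \<ge> a" for t
    using norm_le_SUP_norm[OF K continuous_on_Times_slice_fst[OF cF]] that
    by (intro bdd_aboveI2) auto
  show ?thesis unfolding continuous_on_iff
  proof (intro ballI allI impI)
    fix t0 e :: real assume t0: "t0 \<in> {a..}" and e: "e > 0"
    define S where "S = {a..t0+1} \<times> K"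
    have "uniformly_continuous_on S (\<lambda>(t, k). F t k)"
      unfolding S_def using K
      by (intro compact_uniformly_continuous continuous_on_subset[OF cF] compact_Times) auto
    then obtain d where d: "d > 0" "\<And>p q. p \<in> S \<Longrightarrow> q \<in> S \<Longrightarrow> dist p q < d \<Longrightarrow>
        dist ((\<lambda>(t, k). F t k) p) ((\<lambda>(t, k). F t k) q) < e/2"
      unfolding uniformly_continuous_on_def using e by (meson half_gt_zero)
    show "\<exists>d>0. \<forall>t\<in>{a..}. dist t t0 < d \<longrightarrow>
        dist (SUP k\<in>K. norm (F t k)) (SUP k\<in>K. norm (F t0 k)) < e"
    proof (intro exI[of _ "min d 1"] conjI ballI impI)
      show "min d 1 > 0" using d by simp
      fix t assume t: "t \<in> {a..}" "dist t t0 < min d 1"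
      have close: "norm (F t k - F t0 k) < e/2" if "k \<in> K" for k
      proof -
        have "(t, k) \<in> S" "(t0, k) \<in> S" using t t0 that unfolding S_def by (auto simp: dist_real_def)
        moreover have "dist (t, k) (t0, k) < d" using t by (simp add: dist_Pair_Pair)
        ultimately show ?thesis using d(2) by (fastforce simp: dist_norm)
      qed
      have "(SUP k\<in>K. norm (F t k)) \<le> (SUP k\<in>K. norm (F t0 k)) + e/2"
      proof (rule SUP_norm_le_SUP_norm_add)
        fix k assume "k \<in> K"
        from close[OF this] show "norm (F t k) \<le> norm (F t0 k) + e/2"
          using norm_triangle_ineq2[of "F t k" "F t0 k"] by linarith
      qed (use False bdd t0 in auto)
      moreover have "(SUP k\<in>K. norm (F t0 k)) \<le> (SUP k\<in>K. norm (F t k)) + e/2"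
      proof (rule SUP_norm_le_SUP_norm_add)
        fix k assume "k \<in> K"
        from close[OF this] show "norm (F t0 k) \<le> norm (F t k) + e/2"
          using norm_triangle_ineq3[of "F t k" "F t0 k"] by (simp add: norm_minus_commute)
      qed (use False bdd t in auto)
      ultimately show "dist (SUP k\<in>K. norm (F t k)) (SUP k\<in>K. norm (F t0 k)) < e"
        using e by (simp add: dist_real_def abs_le_iff)
    qed
  qed
qed simp

lemma continuous_on_SUP_norm_diff:
  fixes F :: "real \<Rightarrow> 'k::metric_space \<Rightarrow> 'b::real_normed_vector"
  assumes K: "compact K" and cF: "continuous_on ({a..} \<times> K) (\<lambda>(t, k). F t k)"
  shows "continuous_on {a..} (\<lambda>t. SUP xy\<in>K \<times> K. norm (F t (fst xy) - F t (snd xy)))"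
proof (rule continuous_on_SUP_norm[OF compact_Times[OF K K]])
  have "continuous_on ({a..} \<times> (K \<times> K)) (\<lambda>p. (\<lambda>(t, k). F t k) (fst p, fst (snd p)))"
    by (rule continuous_on_compose2[OF cF]) (auto intro!: continuous_intros)
  moreover have "continuous_on ({a..} \<times> (K \<times> K)) (\<lambda>p. (\<lambda>(t, k). F t k) (fst p, snd (snd p)))"
    by (rule continuous_on_compose2[OF cF]) (auto intro!: continuous_intros)
  ultimately show "continuous_on ({a..} \<times> (K \<times> K)) (\<lambda>(t, xy). F t (fst xy) - F t (snd xy))"
    by (auto simp: case_prod_unfold intro!: continuous_intros)
qed

section \<open>Weighted means with respect to a probability density\<close>

definition weighted_mean ::
    "'a::euclidean_space set \<Rightarrow> ('a \<Rightarrow> real) \<Rightarrow> ('a \<Rightarrow> real) \<Rightarrow> ('a \<Rightarrow> 'b::euclidean_space) \<Rightarrow> 'b" where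
  "weighted_mean \<Omega> \<rho> \<phi> V = integral \<Omega> (\<lambda>y. (\<phi> y * \<rho> y) *\<^sub>R V y) /\<^sub>R integral \<Omega> (\<lambda>y. \<phi> y * \<rho> y)"

locale probability_density =
  fixes \<Omega> :: "'a::euclidean_space set" and \<rho> :: "'a \<Rightarrow> real"
  assumes open_domain: "open \<Omega>" and bounded_domain: "bounded \<Omega>"
    and density_nonneg: "\<And>x. x \<in> \<Omega> \<Longrightarrow> 0 \<le> \<rho> x"
    and density_integrable: "\<rho> integrable_on \<Omega>"
    and total_mass: "integral \<Omega> \<rho> = 1"
begin

lemma domain_nonempty: "\<Omega> \<noteq> {}"
  using total_mass by auto

lemma integrable_density_scaleR:
  fixes F :: "'a \<Rightarrow> 'b::euclidean_space"
  assumes "continuous_on (closure \<Omega>) F"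
  shows "(\<lambda>y. \<rho> y *\<^sub>R F y) integrable_on \<Omega>"
proof -
  have "\<rho> absolutely_integrable_on \<Omega>"
    using density_nonneg density_integrable by (simp add: nonnegative_absolutely_integrable_1)
  moreover have "F \<in> borel_measurable (lebesgue_on \<Omega>)"
    using open_domain assms
    by (intro continuous_imp_measurable_on_sets_lebesgue)
      (auto intro: continuous_on_subset[OF _ closure_subset] borel_open)
  moreover have "bounded (F ` \<Omega>)"
    using compact_continuous_image[OF assms compact_closure[THEN iffD2, OF bounded_domain]]
    by (meson bounded_subset closure_subset compact_imp_bounded image_mono)
  moreover have "bilinear (\<lambda>x (c::real). c *\<^sub>R x)"
    by (auto simp: bilinear_def linear_iff algebra_simps)
  ultimately have "(\<lambda>y. \<rho> y *\<^sub>R F y) absolutely_integrable_on \<Omega>"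
    using absolutely_integrable_bounded_measurable_product[of "\<lambda>x c. c *\<^sub>R x" F \<Omega> \<rho>] open_domain
    by auto
  thus ?thesis by (simp add: absolutely_integrable_on_def)
qed

lemma integrable_density_mult:
  fixes g :: "'a \<Rightarrow> real"
  assumes "continuous_on (closure \<Omega>) g"
  shows "(\<lambda>y. \<rho> y * g y) integrable_on \<Omega>"
  using integrable_density_scaleR[OF assms] by simp

context
  fixes \<phi> :: "'a \<Rightarrow> real" and m :: real
  assumes weight_cont: "continuous_on (closure \<Omega>) \<phi>"
    and weight_bounds: "\<And>y. y \<in> \<Omega> \<Longrightarrow> m \<le> \<phi> y \<and> \<phi> y \<le> 1" and weight_pos: "0 < m"
begin

lemma weighted_mass_bounds:
  shows "m \<le> integral \<Omega> (\<lambda>y. \<phi> y * \<rho> y)" "integral \<Omega> (\<lambda>y. \<phi> y * \<rho> y) \<le> 1"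
proof -
  have mass: "(\<rho> has_integral 1) \<Omega>" using density_integrable total_mass by (metis integrable_integral)
  have "((\<lambda>y. \<phi> y * \<rho> y) has_integral integral \<Omega> (\<lambda>y. \<phi> y * \<rho> y)) \<Omega>"
    using integrable_density_mult[OF weight_cont] by (simp add: mult.commute integrable_integral)
  moreover have "\<rho> y * m \<le> \<phi> y * \<rho> y" "\<phi> y * \<rho> y \<le> \<rho> y" if "y \<in> \<Omega>" for y
    using weight_bounds[OF that] density_nonneg[OF that] weight_pos
    by (simp_all add: mult.commute mult_right_mono mult_left_le_one_le)
  ultimately show "m \<le> integral \<Omega> (\<lambda>y. \<phi> y * \<rho> y)" "integral \<Omega> (\<lambda>y. \<phi> y * \<rho> y) \<le> 1"
    using has_integral_le[OF has_integral_mult_left[OF mass, of m]] has_integral_le[OF _ mass] by auto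
qed

lemma integrable_weighted_scaleR:
  fixes V :: "'a \<Rightarrow> 'b::euclidean_space"
  assumes "continuous_on (closure \<Omega>) V"
  shows "(\<lambda>y. (\<phi> y * \<rho> y) *\<^sub>R V y) integrable_on \<Omega>"
  using integrable_density_scaleR[of "\<lambda>y. \<phi> y *\<^sub>R V y"] weight_cont assms
  by (auto simp: mult.commute intro: continuous_intros)

lemma weighted_mean_le_mix:
  fixes f :: "'a \<Rightarrow> real"
  assumes f: "continuous_on (closure \<Omega>) f" "\<And>y. y \<in> \<Omega> \<Longrightarrow> f y \<le> s"
  shows "weighted_mean \<Omega> \<rho> \<phi> f \<le> (1 - m) * s + m * integral \<Omega> (\<lambda>y. \<rho> y * f y)"
proof -
  define A where "A = integral \<Omega> (\<lambda>y. \<phi> y * \<rho> y)"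
  define J where "J = integral \<Omega> (\<lambda>y. \<rho> y * f y)"
  have "m \<le> A" "A \<le> 1" unfolding A_def by (fact weighted_mass_bounds)+
  have hA: "((\<lambda>y. \<phi> y * \<rho> y) has_integral A) \<Omega>"
    unfolding A_def using integrable_weighted_scaleR[of "\<lambda>_. 1::real"] by (simp add: integrable_integral)
  have hJ: "((\<lambda>y. \<rho> y * f y) has_integral J) \<Omega>"
    unfolding J_def using integrable_density_mult[OF f(1)] by (simp add: integrable_integral)
  have hr: "(\<rho> has_integral 1) \<Omega>" using density_integrable total_mass by (metis integrable_integral)
  have hX: "((\<lambda>y. (\<phi> y * \<rho> y) * f y) has_integral integral \<Omega> (\<lambda>y. (\<phi> y * \<rho> y) * f y)) \<Omega>"
    using integrable_weighted_scaleR[OF f(1)] by (simp add: integrable_integral)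
  \<comment> \<open>split the weight as \<open>\<phi> \<rho> = (\<phi> - A m) \<rho> + A m \<rho>\<close> with \<open>\<phi> - A m \<ge> 0\<close>,
    and bound \<open>f \<le> s\<close> on the first part\<close>
  have "((\<lambda>y. (\<phi> y * \<rho> y - A * m * \<rho> y) * s + A * m * (\<rho> y * f y)) has_integral
      (A - A * m * 1) * s + A * m * J) \<Omega>"
    by (intro has_integral_add has_integral_mult_left has_integral_mult_right has_integral_diff hA hJ hr)
  moreover have "(\<phi> y * \<rho> y) * f y \<le> (\<phi> y * \<rho> y - A * m * \<rho> y) * s + A * m * (\<rho> y * f y)"
    if y: "y \<in> \<Omega>" for y
  proof -
    have "A * m \<le> m" using \<open>A \<le> 1\<close> weight_pos by (simp add: mult_left_le_one_le)
    hence "0 \<le> (\<phi> y - A * m) * \<rho> y" using weight_bounds[OF y] density_nonneg[OF y] by simp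
    hence "(\<phi> y - A * m) * \<rho> y * f y \<le> (\<phi> y - A * m) * \<rho> y * s" using f(2)[OF y] by (simp add: mult_left_mono)
    thus ?thesis by (simp add: algebra_simps)
  qed
  ultimately have "integral \<Omega> (\<lambda>y. (\<phi> y * \<rho> y) * f y) \<le> (A - A * m * 1) * s + A * m * J"
    using has_integral_le[OF hX] by blast
  moreover have "A > 0" using \<open>m \<le> A\<close> weight_pos by simp
  ultimately show ?thesis
    unfolding weighted_mean_def A_def[symmetric] J_def[symmetric]
    by (simp add: divide_simps) (simp add: algebra_simps)
qed

lemma norm_weighted_mean_le:
  fixes V :: "'a \<Rightarrow> 'b::euclidean_space"
  assumes V: "continuous_on (closure \<Omega>) V" "\<And>y. y \<in> \<Omega> \<Longrightarrow> norm (V y) \<le> B"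
  shows "norm (weighted_mean \<Omega> \<rho> \<phi> V) \<le> B"
proof -
  define A where "A = integral \<Omega> (\<lambda>y. \<phi> y * \<rho> y)"
  have "m \<le> A" unfolding A_def by (fact weighted_mass_bounds)
  have "norm (integral \<Omega> (\<lambda>y. (\<phi> y * \<rho> y) *\<^sub>R V y)) \<le> integral \<Omega> (\<lambda>y. (\<phi> y * \<rho> y) * B)"
  proof (rule integral_norm_bound_integral[OF integrable_weighted_scaleR[OF V(1)]])
    show "(\<lambda>y. \<phi> y * \<rho> y * B) integrable_on \<Omega>"
      using integrable_weighted_scaleR[of "\<lambda>_. B"] by simp
    fix y assume y: "y \<in> \<Omega>"
    have "0 \<le> \<phi> y * \<rho> y" using weight_bounds[OF y] density_nonneg[OF y] weight_pos by simp
    thus "norm ((\<phi> y * \<rho> y) *\<^sub>R V y) \<le> \<phi> y * \<rho> y * B" using V(2)[OF y] by (simp add: mult_left_mono)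
  qed
  also have "\<dots> = A * B" unfolding A_def by simp
  finally show ?thesis
    unfolding weighted_mean_def A_def[symmetric] using \<open>m \<le> A\<close> weight_pos
    by (simp add: divide_simps mult.commute)
qed

lemma inner_weighted_mean:
  fixes V :: "'a \<Rightarrow> 'b::euclidean_space"
  assumes "continuous_on (closure \<Omega>) V"
  shows "e \<bullet> weighted_mean \<Omega> \<rho> \<phi> V = weighted_mean \<Omega> \<rho> \<phi> (\<lambda>y. e \<bullet> V y)"
  using integral_linear[OF integrable_weighted_scaleR[OF assms] bounded_linear_inner_right, of e]
  by (simp add: weighted_mean_def o_def divide_inverse mult.commute)

end

lemma norm_weighted_mean_diff_le:
  fixes V :: "'a \<Rightarrow> 'b::euclidean_space"
  assumes \<phi>1: "continuous_on (closure \<Omega>) \<phi>1" "\<And>y. y \<in> \<Omega> \<Longrightarrow> m \<le> \<phi>1 y \<and> \<phi>1 y \<le> 1"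
    and \<phi>2: "continuous_on (closure \<Omega>) \<phi>2" "\<And>y. y \<in> \<Omega> \<Longrightarrow> m \<le> \<phi>2 y \<and> \<phi>2 y \<le> 1" and m: "0 < m"
    and V: "continuous_on (closure \<Omega>) V" "\<And>y z. y \<in> \<Omega> \<Longrightarrow> z \<in> \<Omega> \<Longrightarrow> norm (V y - V z) \<le> D"
  shows "norm (weighted_mean \<Omega> \<rho> \<phi>1 V - weighted_mean \<Omega> \<rho> \<phi>2 V) \<le> (1 - m) * D"
proof -
  obtain z0 where z0: "z0 \<in> \<Omega>" using domain_nonempty by blast
  have "0 \<le> D" "m \<le> 1" using V(2)[OF z0 z0] \<phi>1(2)[OF z0] by auto
  define w where "w = weighted_mean \<Omega> \<rho> \<phi>1 V - weighted_mean \<Omega> \<rho> \<phi>2 V"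
  show ?thesis
  proof (cases "w = 0")
    case True thus ?thesis using \<open>0 \<le> D\<close> \<open>m \<le> 1\<close> unfolding w_def by simp
  next
    case False
    \<comment> \<open>project onto the direction of \<open>w\<close>; the scalar oscillation of \<open>e \<bullet> V\<close> is at most \<open>D\<close>\<close>
    define e where "e = w /\<^sub>R norm w"
    define f where "f = (\<lambda>y. e \<bullet> V y)"
    have cf: "continuous_on (closure \<Omega>) f" unfolding f_def using V(1) by (intro continuous_intros)
    have fD: "f y \<le> f z + D" if "y \<in> \<Omega>" "z \<in> \<Omega>" for y z
    proof -
      have "f y - f z \<le> norm e * norm (V y - V z)"
        unfolding f_def inner_diff_right[symmetric] by (rule norm_cauchy_schwarz)
      also have "\<dots> \<le> D" using False V(2)[OF that] unfolding e_def by simp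
      finally show ?thesis by simp
    qed
    define s where "s = (SUP y\<in>\<Omega>. f y)"
    define i where "i = (INF y\<in>\<Omega>. f y)"
    have fs: "f y \<le> s" if "y \<in> \<Omega>" for y
      unfolding s_def using fD z0 that by (intro cSUP_upper bdd_aboveI2) auto
    have fi: "i \<le> f y" if "y \<in> \<Omega>" for y
      unfolding i_def using fD z0 that by (intro cINF_lower bdd_belowI2[of _ "f z0 - D"]) force+
    have "s \<le> f z + D" if "z \<in> \<Omega>" for z
      unfolding s_def using domain_nonempty fD that by (intro cSUP_least) auto
    hence "s - D \<le> i" unfolding i_def using domain_nonempty by (intro cINF_greatest) (auto simp: algebra_simps)
    have upper: "e \<bullet> weighted_mean \<Omega> \<rho> \<phi>1 V \<le> (1 - m) * s + m * integral \<Omega> (\<lambda>y. \<rho> y * f y)"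
      using weighted_mean_le_mix[OF \<phi>1 m cf fs] inner_weighted_mean[OF \<phi>1 m V(1)] by (simp add: f_def)
    have "weighted_mean \<Omega> \<rho> \<phi>2 (\<lambda>y. - f y) \<le> (1 - m) * - i + m * integral \<Omega> (\<lambda>y. \<rho> y * - f y)"
      using cf fi by (intro weighted_mean_le_mix[OF \<phi>2 m]) (auto intro: continuous_intros)
    moreover have "weighted_mean \<Omega> \<rho> \<phi>2 (\<lambda>y. - f y) = - (e \<bullet> weighted_mean \<Omega> \<rho> \<phi>2 V)"
      using inner_weighted_mean[OF \<phi>2 m V(1), of "- e"] by (simp add: f_def)
    ultimately have lower: "(1 - m) * i + m * integral \<Omega> (\<lambda>y. \<rho> y * f y) \<le> e \<bullet> weighted_mean \<Omega> \<rho> \<phi>2 V"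
      by (simp add: integral_neg)
    have "norm w = e \<bullet> w"
      unfolding e_def using False by (simp add: inner_commute power2_norm_eq_inner[symmetric] power2_eq_square)
    hence "norm w \<le> (1 - m) * (s - i)"
      using upper lower unfolding w_def by (simp add: inner_diff_right algebra_simps)
    also have "\<dots> \<le> (1 - m) * D" using \<open>s - D \<le> i\<close> \<open>m \<le> 1\<close> by (simp add: mult_left_mono)
    finally show ?thesis unfolding w_def .
  qed
qed

end

section \<open>The delayed alignment system\<close>

locale delayed_alignment_solution = probability_density \<Omega>0 rho0
  for \<Omega>0 :: "'a::euclidean_space set" and rho0 :: "'a \<Rightarrow> real" +
  fixes \<tau> :: real and psi :: "'a \<Rightarrow> real" and psit :: "real \<Rightarrow> real"
    and eta v :: "real \<Rightarrow> 'a \<Rightarrow> 'a"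
  assumes delay_nonneg: "0 \<le> \<tau>"
    and psi: "psi_assm psi psit"
    and eta_cont: "continuous_on ({-\<tau>..} \<times> closure \<Omega>0) (\<lambda>(t, x). eta t x)"
    and v_cont: "continuous_on ({-\<tau>..} \<times> closure \<Omega>0) (\<lambda>(t, x). v t x)"
    and eta_deriv: "\<And>x t. x \<in> \<Omega>0 \<Longrightarrow> -\<tau> \<le> t \<Longrightarrow>
        ((\<lambda>s. eta s x) has_vector_derivative v t x) (at t within {-\<tau>..})"
    and v_deriv: "\<And>x t. x \<in> \<Omega>0 \<Longrightarrow> 0 < t \<Longrightarrow>
        ((\<lambda>s. v s x) has_vector_derivative (align psi rho0 \<Omega>0 eta v \<tau> t x - v t x)) (at t)"
    and history_bounded: "bdd_above ((\<lambda>(s, x). norm (v s x)) ` ({-\<tau>..0} \<times> closure \<Omega>0))"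
begin

abbreviation "K \<equiv> closure \<Omega>0"
abbreviation "DV \<equiv> dV v \<Omega>0"
abbreviation "DX \<equiv> dX eta \<Omega>0"
abbreviation "R \<equiv> RV v \<Omega>0 \<tau>"
abbreviation "W \<equiv> align psi rho0 \<Omega>0 eta v \<tau>"

lemma K_compact: "compact K"
  using bounded_domain by (simp add: compact_closure)

lemma K_nonempty: "K \<noteq> {}"
  using domain_nonempty by simp

lemma psi_radial: "psi z = psit (norm z)"
  using psi unfolding psi_assm_def by auto

lemma psit_pos: "0 \<le> r \<Longrightarrow> 0 < psit r"
  using psi unfolding psi_assm_def by auto

lemma psit_antimono: "0 \<le> r \<Longrightarrow> r \<le> s \<Longrightarrow> psit s \<le> psit r"
  using psi unfolding psi_assm_def by auto

lemma psit_le_one: "0 \<le> r \<Longrightarrow> psit r \<le> 1"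
  using psit_antimono[of 0 r] psi unfolding psi_assm_def by simp

lemma psi_continuous: "continuous_on UNIV psi"
  using psi unfolding psi_assm_def by auto

lemma psit_continuous_on: "continuous_on {0..} psit"
proof -
  obtain e :: 'a where e: "e \<in> Basis" using nonempty_Basis by blast
  have "continuous_on {0..} (\<lambda>r. psi (r *\<^sub>R e))"
    by (intro continuous_on_compose2[OF psi_continuous] continuous_intros) auto
  moreover have "psi (r *\<^sub>R e) = psit r" if "r \<in> {0..}" for r
    using e that by (simp add: psi_radial)
  ultimately show ?thesis by (rule continuous_on_eq)
qed

lemma v_slice_continuous: "-\<tau> \<le> t \<Longrightarrow> continuous_on K (v t)"
  by (rule continuous_on_Times_slice_fst[OF v_cont]) simp

lemma eta_slice_continuous: "-\<tau> \<le> t \<Longrightarrow> continuous_on K (eta t)"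
  by (rule continuous_on_Times_slice_fst[OF eta_cont]) simp

lemma v_path_continuous: "x \<in> K \<Longrightarrow> continuous_on {-\<tau>..} (\<lambda>t. v t x)"
  by (rule continuous_on_Times_slice_snd[OF v_cont])

lemma norm_v_diff_le_dV: "-\<tau> \<le> t \<Longrightarrow> x \<in> K \<Longrightarrow> y \<in> K \<Longrightarrow> norm (v t x - v t y) \<le> DV t"
  unfolding dV_def by (rule norm_diff_le_SUP_norm_diff[OF K_compact v_slice_continuous])

lemma norm_eta_diff_le_dX: "-\<tau> \<le> t \<Longrightarrow> x \<in> K \<Longrightarrow> y \<in> K \<Longrightarrow> norm (eta t x - eta t y) \<le> DX t"
  unfolding dX_def by (rule norm_diff_le_SUP_norm_diff[OF K_compact eta_slice_continuous])

lemma dV_le: "-\<tau> \<le> t \<Longrightarrow> \<forall>x\<in>\<Omega>0. \<forall>y\<in>\<Omega>0. norm (v t x - v t y) \<le> c \<Longrightarrow> DV t \<le> c"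
  unfolding dV_def by (rule SUP_norm_diff_closure_le[OF domain_nonempty v_slice_continuous])

lemma dX_le: "-\<tau> \<le> t \<Longrightarrow> \<forall>x\<in>\<Omega>0. \<forall>y\<in>\<Omega>0. norm (eta t x - eta t y) \<le> c \<Longrightarrow> DX t \<le> c"
  unfolding dX_def by (rule SUP_norm_diff_closure_le[OF domain_nonempty eta_slice_continuous])

lemma dV_nonneg: "-\<tau> \<le> t \<Longrightarrow> 0 \<le> DV t"
  using K_nonempty norm_v_diff_le_dV[of t] by (metis all_not_in_conv norm_ge_zero order_trans)

lemma dX_nonneg: "-\<tau> \<le> t \<Longrightarrow> 0 \<le> DX t"
  using K_nonempty norm_eta_diff_le_dX[of t] by (metis all_not_in_conv norm_ge_zero order_trans)

lemma continuous_on_dV: "continuous_on {-\<tau>..} DV"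
  unfolding dV_def by (rule continuous_on_SUP_norm_diff[OF K_compact v_cont])

lemma dV_integrable: "-\<tau> \<le> a \<Longrightarrow> DV integrable_on {a..b}"
  by (rule integrable_continuous_interval, rule continuous_on_subset[OF continuous_on_dV]) auto

lemma integral_dV_nonneg: "-\<tau> \<le> a \<Longrightarrow> 0 \<le> integral {a..b} DV"
  by (rule integral_nonneg[OF dV_integrable]) (auto intro: dV_nonneg)

lemma norm_v_history_le_RV: "s \<in> {-\<tau>..0} \<Longrightarrow> x \<in> K \<Longrightarrow> norm (v s x) \<le> R"
  using cSUP_upper[OF _ history_bounded, of "(s, x)"] unfolding RV_def by (simp add: case_prod_unfold)

lemma RV_nonneg: "0 \<le> R"
  using K_nonempty norm_v_history_le_RV[of 0] delay_nonneg
  by (metis all_not_in_conv atLeastAtMost_iff neg_le_0_iff_le norm_ge_zero order_refl order_trans)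

lemma align_eq_weighted_mean:
  "W t x = weighted_mean \<Omega>0 rho0 (\<lambda>y. psi (eta t x - eta (t - \<tau>) y)) (v (t - \<tau>))"
  unfolding align_def weighted_mean_def ..

lemma interaction_weight_continuous:
  "0 \<le> t \<Longrightarrow> continuous_on K (\<lambda>y. psi (eta t x - eta (t - \<tau>) y))"
  by (intro continuous_on_compose2[OF psi_continuous] continuous_intros eta_slice_continuous) auto

lemma interaction_weight_bounds:
  "0 < psi (eta t x - eta (t - \<tau>) y) \<and> psi (eta t x - eta (t - \<tau>) y) \<le> 1"
  using psit_pos psit_le_one by (simp add: psi_radial)

lemma norm_align_le:
  assumes "0 \<le> t" and B: "\<forall>y\<in>\<Omega>0. norm (v (t - \<tau>) y) \<le> B"
  shows "norm (W t x) \<le> B"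
proof -
  obtain y0 where "y0 \<in> K" and y0: "\<forall>y\<in>K. psi (eta t x - eta (t - \<tau>) y0) \<le> psi (eta t x - eta (t - \<tau>) y)"
    using continuous_attains_inf[OF K_compact K_nonempty interaction_weight_continuous[OF \<open>0 \<le> t\<close>]] by blast
  show ?thesis unfolding align_eq_weighted_mean
  proof (rule norm_weighted_mean_le)
    show "continuous_on K (v (t - \<tau>))" using \<open>0 \<le> t\<close> by (intro v_slice_continuous) simp
  qed (use \<open>0 \<le> t\<close> B y0 closure_subset interaction_weight_continuous interaction_weight_bounds in auto)
qed

definition speed :: "real \<Rightarrow> real" where
  "speed t = (SUP x\<in>K. norm (v t x))"

lemma continuous_on_speed: "continuous_on {-\<tau>..} speed"
  unfolding speed_def by (rule continuous_on_SUP_norm[OF K_compact v_cont])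

lemma norm_v_le_speed: "-\<tau> \<le> t \<Longrightarrow> x \<in> K \<Longrightarrow> norm (v t x) \<le> speed t"
  unfolding speed_def by (rule norm_le_SUP_norm[OF K_compact v_slice_continuous])

lemma speed_le: "-\<tau> \<le> t \<Longrightarrow> \<forall>x\<in>\<Omega>0. norm (v t x) \<le> c \<Longrightarrow> speed t \<le> c"
  unfolding speed_def by (rule SUP_norm_closure_le[OF domain_nonempty v_slice_continuous])

lemma norm_v_le_of_speed_bound:
  assumes t: "0 < t" and x: "x \<in> \<Omega>0" and \<epsilon>: "0 < \<epsilon>"
    and speed_bound: "\<forall>s\<in>{0..t}. speed s \<le> R + \<epsilon>"
  shows "norm (v t x) \<le> R + \<epsilon> * (1 - exp (-t))"
proof -
  have xK: "x \<in> K" using x closure_subset by blast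
  have "norm (v t x) \<le> exp (-t) * norm (v 0 x) + exp (-t) * integral {0..t} (\<lambda>s. exp s * (R + \<epsilon>))"
  proof (rule norm_le_variation_of_constants[where f = "\<lambda>s. W s x"])
    show "continuous_on {0..t} (\<lambda>s. v s x)"
      by (rule continuous_on_subset[OF v_path_continuous[OF xK]]) (use delay_nonneg in auto)
    fix s assume s: "s \<in> {0..t}"
    have "norm (v (s - \<tau>) y) \<le> R + \<epsilon>" if "y \<in> \<Omega>0" for y
    proof (cases "s - \<tau> \<le> 0")
      case True
      thus ?thesis using s \<epsilon> that closure_subset norm_v_history_le_RV[of "s - \<tau>" y] by force
    next
      case False
      hence "s - \<tau> \<in> {0..t}" using s delay_nonneg by simp
      have "norm (v (s - \<tau>) y) \<le> speed (s - \<tau>)"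
        using that closure_subset False delay_nonneg by (intro norm_v_le_speed) auto
      also have "\<dots> \<le> R + \<epsilon>" using speed_bound \<open>s - \<tau> \<in> {0..t}\<close> by blast
      finally show ?thesis .
    qed
    thus "norm (W s x) \<le> R + \<epsilon>" using s by (intro norm_align_le) auto
  qed (use t x v_deriv in auto)
  also have "integral {0..t} (\<lambda>s. exp s * (R + \<epsilon>)) = (exp t - 1) * (R + \<epsilon>)"
    using has_integral_mult_left[OF exp_scaled_has_integral[of 1 t]] t by (simp add: integral_unique)
  also have "exp (-t) * norm (v 0 x) \<le> exp (-t) * R"
    using norm_v_history_le_RV[of 0 x] delay_nonneg xK by simp
  hence "exp (-t) * norm (v 0 x) + exp (-t) * ((exp t - 1) * (R + \<epsilon>))
      \<le> exp (-t) * R + exp (-t) * ((exp t - 1) * (R + \<epsilon>))" by simp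
  also have "\<dots> = R + \<epsilon> * (1 - exp (-t))" by (simp add: exp_minus field_simps)
  finally show ?thesis .
qed

lemma speed_le_RV:
  assumes "0 \<le> t"
  shows "speed t \<le> R"
proof (rule field_le_epsilon)
  fix \<epsilon> :: real assume \<epsilon>: "0 < \<epsilon>"
  \<comment> \<open>velocities relax towards averages of earlier velocities, which stay below \<open>R + \<epsilon>\<close>
    until that level is first reached\<close>
  have "\<forall>t\<ge>0. speed t < R + \<epsilon>"
  proof (rule less_on_atLeast_by_first_crossing)
    show "continuous_on {0..} speed"
      by (rule continuous_on_subset[OF continuous_on_speed]) (use delay_nonneg in auto)
    have "speed 0 \<le> R"
      using delay_nonneg closure_subset by (intro speed_le ballI norm_v_history_le_RV) auto
    thus "speed 0 < R + \<epsilon>" using \<epsilon> by simp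
    fix t :: real assume t: "0 < t" and "\<forall>s\<in>{0..t}. speed s \<le> R + \<epsilon>"
    hence "speed t \<le> R + \<epsilon> * (1 - exp (-t))"
      using \<epsilon> delay_nonneg norm_v_le_of_speed_bound by (intro speed_le ballI) simp_all
    also have "\<dots> < R + \<epsilon>" using \<epsilon> by simp
    finally show "speed t < R + \<epsilon>" .
  qed (intro continuous_intros)
  thus "speed t \<le> R + \<epsilon>" using assms by (simp add: less_imp_le)
qed

lemma norm_v_le_RV: "-\<tau> \<le> t \<Longrightarrow> x \<in> K \<Longrightarrow> norm (v t x) \<le> R"
proof (cases "t \<le> 0")
  case False
  assume "-\<tau> \<le> t" "x \<in> K"
  thus ?thesis using False norm_v_le_speed[of t x] speed_le_RV[of t] by simp
qed (simp add: norm_v_history_le_RV)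

lemma norm_eta_delay_le:
  assumes s: "0 \<le> s" and x: "x \<in> \<Omega>0"
  shows "norm (eta s x - eta (s - \<tau>) x) \<le> R * \<tau>"
proof -
  have hi: "((\<lambda>r. v r x) has_integral eta s x - eta (s - \<tau>) x) {s - \<tau>..s}"
  proof (rule fundamental_theorem_of_calculus)
    fix r assume "r \<in> {s - \<tau>..s}"
    hence "((\<lambda>s. eta s x) has_vector_derivative v r x) (at r within {-\<tau>..})"
      using eta_deriv[OF x, of r] s by simp
    thus "((\<lambda>s. eta s x) has_vector_derivative v r x) (at r within {s - \<tau>..s})"
      by (rule has_vector_derivative_within_subset) (use s in auto)
  qed (use delay_nonneg in simp)
  have xK: "x \<in> K" using x closure_subset by blast
  have "norm (v r x) \<le> R" if "r \<in> {s - \<tau>..s} - {}" for r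
    using that s by (intro norm_v_le_RV[OF _ xK]) simp
  from has_integral_bound_real[OF RV_nonneg finite.emptyI hi this]
  show ?thesis using delay_nonneg by simp
qed

lemma norm_eta_diff_le_integral_dV:
  assumes r: "-\<tau> \<le> r" and x: "x \<in> \<Omega>0" and z: "z \<in> \<Omega>0"
  shows "norm (eta r x - eta r z) \<le> DX (-\<tau>) + integral {-\<tau>..r} DV"
proof -
  have xK: "x \<in> K" and zK: "z \<in> K" using x z closure_subset by auto
  have hi: "((\<lambda>q. v q x - v q z) has_integral (eta r x - eta r z) - (eta (-\<tau>) x - eta (-\<tau>) z)) {-\<tau>..r}"
  proof (rule fundamental_theorem_of_calculus[OF r])
    fix q assume "q \<in> {-\<tau>..r}"
    hence "((\<lambda>s. eta s x - eta s z) has_vector_derivative v q x - v q z) (at q within {-\<tau>..})"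
      using eta_deriv x z by (intro has_vector_derivative_diff) auto
    thus "((\<lambda>s. eta s x - eta s z) has_vector_derivative v q x - v q z) (at q within {-\<tau>..r})"
      by (rule has_vector_derivative_within_subset) auto
  qed
  have "norm ((eta r x - eta r z) - (eta (-\<tau>) x - eta (-\<tau>) z)) \<le> integral {-\<tau>..r} DV"
    unfolding integral_unique[OF hi, symmetric]
    using hi xK zK by (intro integral_norm_bound_integral dV_integrable norm_v_diff_le_dV) auto
  moreover have "norm (eta (-\<tau>) x - eta (-\<tau>) z) \<le> DX (-\<tau>)"
    using xK zK by (intro norm_eta_diff_le_dX) auto
  ultimately show ?thesis
    using norm_triangle_ineq[of "(eta r x - eta r z) - (eta (-\<tau>) x - eta (-\<tau>) z)" "eta (-\<tau>) x - eta (-\<tau>) z"]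
    by simp
qed

abbreviation spread0 :: real where
  "spread0 \<equiv> DX (-\<tau>) + R * \<tau>"

definition spread :: "real \<Rightarrow> real" where
  "spread t = spread0 + integral {-\<tau>..t - \<tau>} DV"

lemma spread0_nonneg: "0 \<le> spread0"
  using dX_nonneg[of "-\<tau>"] RV_nonneg delay_nonneg by simp

lemma spread_ge_spread0: "0 \<le> t \<Longrightarrow> spread0 \<le> spread t"
  unfolding spread_def using integral_dV_nonneg[of "-\<tau>" "t - \<tau>"] by simp

lemma spread_nonneg: "0 \<le> t \<Longrightarrow> 0 \<le> spread t"
  using spread_ge_spread0 spread0_nonneg by force

lemma norm_eta_delayed_diff_le_spread:
  assumes s: "0 \<le> s" and x: "x \<in> \<Omega>0" and y: "y \<in> \<Omega>0"
  shows "norm (eta s x - eta (s - \<tau>) y) \<le> spread s"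
proof -
  have "norm (eta s x - eta (s - \<tau>) y) \<le> norm (eta s x - eta (s - \<tau>) x) + norm (eta (s - \<tau>) x - eta (s - \<tau>) y)"
    by (rule order_trans[OF _ norm_triangle_ineq]) simp
  also have "\<dots> \<le> R * \<tau> + (DX (-\<tau>) + integral {-\<tau>..s - \<tau>} DV)"
    using norm_eta_delay_le[OF s x] norm_eta_diff_le_integral_dV[OF _ x y, of "s - \<tau>"] s
    by (intro add_mono) auto
  finally show ?thesis unfolding spread_def by simp
qed

lemma continuous_on_spread: "continuous_on {0..T} spread"
proof -
  have "continuous_on {-\<tau>..T - \<tau>} (\<lambda>u. integral {-\<tau>..u} DV)"
    by (intro indefinite_integral_continuous_1 dV_integrable) simp
  hence "continuous_on {0..T} (\<lambda>t. integral {-\<tau>..t - \<tau>} DV)"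
    by (rule continuous_on_compose2) (auto intro: continuous_intros)
  thus ?thesis unfolding spread_def by (intro continuous_intros)
qed

lemma spread_has_derivative:
  assumes "0 < t"
  shows "(spread has_real_derivative DV (t - \<tau>)) (at t)"
proof -
  have "((\<lambda>u. integral {-\<tau>..u} DV) has_real_derivative DV (t - \<tau>)) (at (t - \<tau>))"
    using assms delay_nonneg by (intro integral_has_real_derivative_at[where b = "t + 1"] continuous_on_subset[OF continuous_on_dV]) auto
  moreover have "((\<lambda>t. t - \<tau>) has_real_derivative 1) (at t)"
    by (intro derivative_eq_intros) auto
  ultimately have "((\<lambda>t. integral {-\<tau>..t - \<tau>} DV) has_real_derivative DV (t - \<tau>)) (at t)"
    using DERIV_chain2 by fastforce
  thus ?thesis unfolding spread_def[abs_def] by (auto intro!: derivative_eq_intros)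
qed

lemma norm_align_diff_le:
  assumes s: "0 \<le> s" and x: "x \<in> \<Omega>0" and x': "x' \<in> \<Omega>0"
  shows "norm (W s x - W s x') \<le> (1 - psit (spread s)) * DV (s - \<tau>)"
proof -
  have weight_bounds: "psit (spread s) \<le> psi (eta s z - eta (s - \<tau>) y) \<and> psi (eta s z - eta (s - \<tau>) y) \<le> 1"
    if "z \<in> \<Omega>0" "y \<in> \<Omega>0" for z y
    using norm_eta_delayed_diff_le_spread[OF s that] interaction_weight_bounds
    by (simp add: psi_radial psit_antimono)
  show ?thesis unfolding align_eq_weighted_mean
  proof (rule norm_weighted_mean_diff_le)
    show "0 < psit (spread s)" using s by (intro psit_pos spread_nonneg)
    show "continuous_on K (v (s - \<tau>))" using s by (intro v_slice_continuous) simp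
    show "norm (v (s - \<tau>) y - v (s - \<tau>) z) \<le> DV (s - \<tau>)" if "y \<in> \<Omega>0" "z \<in> \<Omega>0" for y z
      using that s closure_subset by (intro norm_v_diff_le_dV) auto
  qed (use s x x' weight_bounds interaction_weight_continuous in auto)
qed

definition forcing :: "real \<Rightarrow> real" where
  "forcing s = (1 - psit (spread s)) * DV (s - \<tau>)"

lemma continuous_on_forcing: "continuous_on {0..T} forcing"
proof -
  have "continuous_on {0..T} (\<lambda>s. psit (spread s))"
    by (rule continuous_on_compose2[OF psit_continuous_on continuous_on_spread]) (auto intro: spread_nonneg)
  moreover have "continuous_on {0..T} (\<lambda>s. DV (s - \<tau>))"
    by (rule continuous_on_compose2[OF continuous_on_dV]) (auto intro: continuous_intros)
  ultimately show ?thesis unfolding forcing_def by (intro continuous_intros)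
qed

definition majorant :: "real \<Rightarrow> real" where
  "majorant t = exp (-t) * DV 0 + exp (-t) * integral {0..t} (\<lambda>s. exp s * forcing s)"

lemma dV_le_majorant:
  assumes t: "0 \<le> t"
  shows "DV t \<le> majorant t"
proof (rule dV_le)
  show "\<forall>x\<in>\<Omega>0. \<forall>x'\<in>\<Omega>0. norm (v t x - v t x') \<le> majorant t"
  proof (intro ballI)
    fix x x' assume x: "x \<in> \<Omega>0" and x': "x' \<in> \<Omega>0"
    have xK: "x \<in> K" and x'K: "x' \<in> K" using x x' closure_subset by auto
    have "norm (v t x - v t x') \<le> exp (-t) * norm (v 0 x - v 0 x') + exp (-t) * integral {0..t} (\<lambda>s. exp s * forcing s)"
    proof (rule norm_le_variation_of_constants[OF t, where f = "\<lambda>s. W s x - W s x'"])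
      show "continuous_on {0..t} (\<lambda>s. v s x - v s x')"
        using delay_nonneg
        by (intro continuous_intros continuous_on_subset[OF v_path_continuous[OF xK]]
            continuous_on_subset[OF v_path_continuous[OF x'K]]) auto
      show "((\<lambda>s. v s x - v s x') has_vector_derivative W s x - W s x' - (v s x - v s x')) (at s)"
        if "s \<in> {0<..<t}" for s
        using has_vector_derivative_diff[OF v_deriv[OF x] v_deriv[OF x']] that
        by (simp add: algebra_simps)
      show "norm (W s x - W s x') \<le> forcing s" if "s \<in> {0..t}" for s
        unfolding forcing_def using norm_align_diff_le x x' that by auto
    qed (rule continuous_on_forcing)
    also have "norm (v 0 x - v 0 x') \<le> DV 0" using xK x'K delay_nonneg by (intro norm_v_diff_le_dV) auto
    hence "exp (-t) * norm (v 0 x - v 0 x') \<le> exp (-t) * DV 0" by simp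
    finally show "norm (v t x - v t x') \<le> majorant t" unfolding majorant_def by simp
  qed
qed (use t delay_nonneg in simp)

lemma majorant_nonneg: "0 \<le> t \<Longrightarrow> 0 \<le> majorant t"
  using dV_le_majorant dV_nonneg delay_nonneg by (meson neg_le_0_iff_le order.trans)

lemma continuous_on_majorant: "continuous_on {0..T} majorant"
proof -
  have "continuous_on {0..T} (\<lambda>t. integral {0..t} (\<lambda>s. exp s * forcing s))"
    by (intro indefinite_integral_continuous_1 integrable_continuous_interval continuous_intros
        continuous_on_forcing)
  thus ?thesis unfolding majorant_def by (intro continuous_intros)
qed

lemma majorant_has_derivative:
  assumes "0 < t"
  shows "(majorant has_real_derivative forcing t - majorant t) (at t)"
proof -
  have "((\<lambda>t. integral {0..t} (\<lambda>s. exp s * forcing s)) has_real_derivative exp t * forcing t) (at t)"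
    using assms
    by (intro integral_has_real_derivative_at[where b = "t + 1"] continuous_intros continuous_on_forcing) auto
  hence "(majorant has_real_derivative
      - exp (-t) * DV 0 + (- exp (-t) * integral {0..t} (\<lambda>s. exp s * forcing s) + exp (-t) * (exp t * forcing t))) (at t)"
    unfolding majorant_def[abs_def] by (auto intro!: derivative_eq_intros)
  thus ?thesis by (rule DERIV_cong) (simp add: majorant_def exp_minus field_simps)
qed

section \<open>The Lyapunov functional\<close>

text \<open>Extending \<open>psit\<close> continuously to negative arguments makes its primitive differentiable
  at every value of \<open>spread\<close>, including \<open>spread0\<close>.\<close>

definition psit_ext :: "real \<Rightarrow> real" where
  "psit_ext r = psit (max r 0)"

definition Psi :: "real \<Rightarrow> real" where
  "Psi r = integral {-1..r} psit_ext"

lemma psit_ext_continuous: "continuous_on UNIV psit_ext"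
  unfolding psit_ext_def
  by (rule continuous_on_compose2[OF psit_continuous_on]) (auto intro: continuous_intros)

lemma psit_ext_nonneg: "0 \<le> psit_ext r"
  unfolding psit_ext_def using psit_pos[of "max r 0"] by simp

lemma psit_ext_eq: "0 \<le> r \<Longrightarrow> psit_ext r = psit r"
  unfolding psit_ext_def by simp

lemma psit_ext_integrable: "psit_ext integrable_on {a..b}"
  by (rule integrable_continuous_interval, rule continuous_on_subset[OF psit_ext_continuous]) auto

lemma Psi_has_derivative: "-1 < r \<Longrightarrow> (Psi has_real_derivative psit_ext r) (at r)"
  unfolding Psi_def[abs_def]
  by (rule integral_has_real_derivative_at[where b = "r + 1"])
    (auto intro: continuous_on_subset[OF psit_ext_continuous])

lemma Psi_diff: "-1 \<le> a \<Longrightarrow> a \<le> b \<Longrightarrow> Psi b - Psi a = integral {a..b} psit_ext"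
  unfolding Psi_def using Henstock_Kurzweil_Integration.integral_combine[OF _ _ psit_ext_integrable, of "-1" a b] by simp

text \<open>The middle term of \<open>lyapunov t\<close> is the integral of \<open>DV\<close> over \<open>{t - \<tau>..t}\<close>.\<close>

definition lyapunov :: "real \<Rightarrow> real" where
  "lyapunov t = majorant t + (integral {-\<tau>..t} DV - (spread t - spread0)) + Psi (spread t)"

lemma lyapunov_has_derivative:
  assumes t: "0 < t"
  shows "(lyapunov has_real_derivative DV t - majorant t) (at t)"
proof -
  have "((\<lambda>t. integral {-\<tau>..t} DV) has_real_derivative DV t) (at t)"
    using t delay_nonneg
    by (intro integral_has_real_derivative_at[where b = "t + 1"] continuous_on_subset[OF continuous_on_dV]) auto
  moreover have "((\<lambda>t. Psi (spread t)) has_real_derivative psit_ext (spread t) * DV (t - \<tau>)) (at t)"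
    using Psi_has_derivative spread_has_derivative[OF t] spread_nonneg[of t] t
    by (intro DERIV_chain2[where f = Psi]) auto
  ultimately have "(lyapunov has_real_derivative
      forcing t - majorant t + (DV t - (DV (t - \<tau>) - 0)) + psit_ext (spread t) * DV (t - \<tau>)) (at t)"
    unfolding lyapunov_def[abs_def]
    by (intro derivative_intros majorant_has_derivative[OF t] spread_has_derivative[OF t])
  thus ?thesis
    using spread_nonneg[of t] t by (simp add: forcing_def psit_ext_eq algebra_simps)
qed

lemma continuous_on_lyapunov: "continuous_on {0..T} lyapunov"
proof -
  have "continuous_on {0..T} (\<lambda>t. integral {-\<tau>..t} DV)"
    by (rule continuous_on_subset[OF indefinite_integral_continuous_1[OF dV_integrable]])
      (use delay_nonneg in auto)
  moreover have "continuous_on (spread ` {0..T}) Psi"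
    using spread_nonneg
    by (intro continuous_at_imp_continuous_on ballI DERIV_isCont[OF Psi_has_derivative]) force
  hence "continuous_on {0..T} (\<lambda>t. Psi (spread t))"
    by (rule continuous_on_compose2[OF _ continuous_on_spread]) simp
  ultimately show ?thesis
    unfolding lyapunov_def by (intro continuous_intros continuous_on_majorant continuous_on_spread)
qed

lemma lyapunov_le_initial:
  assumes "0 \<le> t"
  shows "lyapunov t \<le> lyapunov 0"
proof (rule DERIV_nonpos_imp_decreasing_open[OF assms _ continuous_on_lyapunov])
  fix s :: real assume "0 < s"
  thus "\<exists>y. (lyapunov has_real_derivative y) (at s) \<and> y \<le> 0"
    using lyapunov_has_derivative dV_le_majorant by force
qed

lemma integral_psit_ext_spread_le:
  assumes t: "0 \<le> t"
  shows "integral {spread0..spread t} psit_ext \<le> DV 0 + integral {-\<tau>..0} DV"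
proof -
  have "integral {-\<tau>..t} DV - (spread t - spread0) = integral {t - \<tau>..t} DV"
    using t delay_nonneg Henstock_Kurzweil_Integration.integral_combine[OF _ _ dV_integrable, of "-\<tau>" "t - \<tau>" t]
    unfolding spread_def by simp
  hence "Psi (spread t) \<le> lyapunov t"
    unfolding lyapunov_def using majorant_nonneg[OF t] integral_dV_nonneg[of "t - \<tau>" t] t by simp
  also have "\<dots> \<le> lyapunov 0" using lyapunov_le_initial[OF t] .
  also have "\<dots> = DV 0 + integral {-\<tau>..0} DV + Psi spread0"
    unfolding lyapunov_def majorant_def spread_def by simp
  finally show ?thesis
    using Psi_diff[of spread0 "spread t"] spread0_nonneg spread_ge_spread0[OF t] by simp
qed

section \<open>Flocking\<close>

lemma spread_bounded:
  assumes flock: "ennreal (DV 0 + integral {-\<tau>..0} DV)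
      < (\<integral>\<^sup>+ s. ennreal (psit s) * indicator {spread0..} s \<partial>lborel)"
  obtains b where "spread0 \<le> b" "\<And>t. 0 \<le> t \<Longrightarrow> spread t < b"
proof -
  have "(\<integral>\<^sup>+ s. ennreal (psit s) * indicator {spread0..} s \<partial>lborel)
      = (\<integral>\<^sup>+ s. ennreal (psit_ext s) * indicator {spread0..} s \<partial>lborel)"
    using spread0_nonneg by (intro nn_integral_cong) (simp add: indicator_def psit_ext_eq)
  then obtain b where b: "spread0 \<le> b" "DV 0 + integral {-\<tau>..0} DV < integral {spread0..b} psit_ext"
    using integral_gt_of_nn_integral_tail_gt[OF psit_ext_continuous psit_ext_nonneg] flock by auto
  have "spread t < b" if t: "0 \<le> t" for t
  proof (rule ccontr)
    assume "\<not> spread t < b"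
    hence "integral {spread0..b} psit_ext \<le> integral {spread0..spread t} psit_ext"
      using b(1) Henstock_Kurzweil_Integration.integral_combine[OF b(1) _ psit_ext_integrable, of "spread t"]
        integral_nonneg[OF psit_ext_integrable psit_ext_nonneg, of b "spread t"]
      by simp
    thus False using b(2) integral_psit_ext_spread_le[OF t] by simp
  qed
  with b(1) show thesis by (rule that)
qed

lemma dX_le_spread:
  assumes "0 \<le> t"
  shows "DX t \<le> spread (t + \<tau>) - R * \<tau>"
proof -
  have "DX t \<le> DX (-\<tau>) + integral {-\<tau>..t} DV"
    using assms delay_nonneg by (intro dX_le ballI norm_eta_diff_le_integral_dV) auto
  thus ?thesis unfolding spread_def by simp
qed

lemma dV_exponential_decay:
  assumes b: "spread0 \<le> b" "\<And>t. 0 \<le> t \<Longrightarrow> spread t < b"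
  shows "\<exists>C>0. \<forall>t\<ge>0. DV t \<le> (SUP s\<in>{-\<tau>..0}. DV s) * exp (- C * t)"
proof -
  define m where "m = psit b"
  have m: "0 < m" "m \<le> 1"
    unfolding m_def using b(1) spread0_nonneg by (auto intro: psit_pos psit_le_one)
  \<comment> \<open>the bound on \<open>spread\<close> makes the contraction factor of the alignment force uniform\<close>
  have forcing_le: "forcing s \<le> (1 - m) * DV (s - \<tau>)" if "0 \<le> s" for s
  proof -
    have "m \<le> psit (spread s)"
      unfolding m_def using spread_nonneg[OF that] b(2)[OF that] by (intro psit_antimono) auto
    thus ?thesis unfolding forcing_def using dV_nonneg[of "s - \<tau>"] that by (intro mult_right_mono) auto
  qed
  have duhamel: "DV t \<le> exp (-t) * DV 0 + exp (-t) * integral {0..t} (\<lambda>s. exp s * ((1 - m) * DV (s - \<tau>)))"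
    if t: "0 \<le> t" for t
  proof -
    have "integral {0..t} (\<lambda>s. exp s * forcing s) \<le> integral {0..t} (\<lambda>s. exp s * ((1 - m) * DV (s - \<tau>)))"
      using forcing_le
      by (intro integral_le integrable_continuous_interval continuous_intros continuous_on_forcing
          continuous_on_compose2[OF continuous_on_dV]) auto
    hence "exp (-t) * integral {0..t} (\<lambda>s. exp s * forcing s)
        \<le> exp (-t) * integral {0..t} (\<lambda>s. exp s * ((1 - m) * DV (s - \<tau>)))" by simp
    thus ?thesis using dV_le_majorant[OF t] unfolding majorant_def by linarith
  qed
  obtain C where C: "0 < C" "C < 1" "(1 - m) * exp (C * \<tau>) \<le> 1 - C"
    using delay_decay_rate[OF m delay_nonneg] by blast
  have "DV t \<le> (SUP s\<in>{-\<tau>..0}. DV s) * exp (- C * t)" if "0 \<le> t" for t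
    using m(2) C continuous_on_dV dV_nonneg duhamel that
    by (intro delayed_duhamel_decay[OF delay_nonneg]) auto
  thus ?thesis using C(1) by blast
qed

lemma flocking:
  assumes flock: "ennreal (DV 0 + integral {-\<tau>..0} DV)
      < (\<integral>\<^sup>+ s. ennreal (psit s) * indicator {spread0..} s \<partial>lborel)"
  shows "bdd_above (DX ` {0..}) \<and> (\<exists>C>0. \<forall>t\<ge>0. DV t \<le> (SUP s\<in>{-\<tau>..0}. DV s) * exp (- C * t))"
proof
  obtain b where b: "spread0 \<le> b" "\<And>t. 0 \<le> t \<Longrightarrow> spread t < b"
    using spread_bounded[OF flock] by blast
  have "DX t \<le> b - R * \<tau>" if "0 \<le> t" for t
    using dX_le_spread[OF that] b(2)[of "t + \<tau>"] that delay_nonneg by simp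
  thus "bdd_above (DX ` {0..})" by (intro bdd_aboveI2) auto
  show "\<exists>C>0. \<forall>t\<ge>0. DV t \<le> (SUP s\<in>{-\<tau>..0}. DV s) * exp (- C * t)"
    by (rule dV_exponential_decay[OF b])
qed

end

theorem theorem2p2:
  fixes \<Omega>0 :: "'a::euclidean_space set"
    and \<tau> :: real
    and rho0 :: "'a \<Rightarrow> real"
    and psi :: "'a \<Rightarrow> real" and psit :: "real \<Rightarrow> real"
    and eta v :: "real \<Rightarrow> 'a \<Rightarrow> 'a"
  assumes tau: "\<tau> \<ge> 0"
    and dom: "bounded \<Omega>0" "open \<Omega>0"
    and rho_nonneg: "\<forall>x\<in>\<Omega>0. rho0 x \<ge> 0"
    and rho_int: "rho0 integrable_on \<Omega>0"
    and rho_mass: "integral \<Omega>0 rho0 = 1"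
    and psi: "psi_assm psi psit"
    and eta_cont: "continuous_on ({-\<tau>..} \<times> closure \<Omega>0) (\<lambda>(t, x). eta t x)"
    and v_cont: "continuous_on ({-\<tau>..} \<times> closure \<Omega>0) (\<lambda>(t, x). v t x)"
    and eta0: "\<forall>x\<in>\<Omega>0. eta 0 x = x"
    and eta_deriv: "\<forall>x\<in>\<Omega>0. \<forall>t\<ge>-\<tau>.
        ((\<lambda>s. eta s x) has_vector_derivative v t x) (at t within {-\<tau>..})"
    and v_deriv: "\<forall>x\<in>\<Omega>0. \<forall>t>0.
        ((\<lambda>s. v s x) has_vector_derivative (align psi rho0 \<Omega>0 eta v \<tau> t x - v t x)) (at t)"
    and RV_fin: "bdd_above ((\<lambda>(s, x). norm (v s x)) ` ({-\<tau>..0} \<times> closure \<Omega>0))"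
    and flock: "ennreal (dV v \<Omega>0 0 + integral {-\<tau>..0} (dV v \<Omega>0))
        < (\<integral>\<^sup>+ s. ennreal (psit s) * indicator {dX eta \<Omega>0 (-\<tau>) + RV v \<Omega>0 \<tau> * \<tau>..} s \<partial>lborel)"
  shows "bdd_above (dX eta \<Omega>0 ` {0..}) \<and>
         (\<exists>C>0. \<forall>t\<ge>0. dV v \<Omega>0 t \<le> (SUP s\<in>{-\<tau>..0}. dV v \<Omega>0 s) * exp (- C * t))"
proof -
  interpret delayed_alignment_solution \<Omega>0 rho0 \<tau> psi psit eta v
    using tau dom rho_nonneg rho_int rho_mass psi eta_cont v_cont eta_deriv v_deriv RV_fin
    by unfold_locales auto
  show ?thesis using flocking[OF flock] .
qed

end
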